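(* Let $k\ge1$ be an integer. The set $N^{(-)}_k=\{s\in S(\theta): \lfloor k\theta\rfloor\le s\le k\theta\}$ is invariant under $s\mapsto \lfloor k\theta\rfloor+k\theta-s$, and the set $N^{(+)}_k=\{s\in S(\theta): \lfloor k/\theta\rfloor\theta\le s\le k\}$ is invariant under $s\mapsto \lfloor k/\theta\rfloor\theta+k-s$. Consequently, listing the elements of either set in increasing order, the sequence of consecutive differences is a palindrome.
   Context: Fix an irrational $\theta$ with $1<\theta<2$ and let $S(\theta)=\{i+j\theta : i,j\in\mathbb{N}_0\}$. *)

theory Defs
  imports Complex_Main
begin

definition S :: "real \<Rightarrow> real set" where
  "S \<theta> = {real i + real j * \<theta> | i j :: nat. True}"

definition Nminus :: "real \<Rightarrow> nat \<Rightarrow> real set" where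
  "Nminus \<theta> k = {s \<in> S \<theta>. real_of_int \<lfloor>real k * \<theta>\<rfloor> \<le> s \<and> s \<le> real k * \<theta>}"

definition Nplus :: "real \<Rightarrow> nat \<Rightarrow> real set" where
  "Nplus \<theta> k = {s \<in> S \<theta>. real_of_int \<lfloor>real k / \<theta>\<rfloor> * \<theta> \<le> s \<and> s \<le> real k}"

definition gaps :: "real list \<Rightarrow> real list" where
  "gaps xs = map (\<lambda>(a, b). b - a) (zip xs (tl xs))"

end

theory Submission
  imports Defs
begin

text \<open>Every element \<open>i + j\<theta>\<close> of \<open>N\<^sup>-\<^sub>k\<close> has \<open>i \<le> \<lfloor>k\<theta>\<rfloor>\<close> and \<open>j \<le> k\<close>, and every element of
  \<open>N\<^sup>+\<^sub>k\<close> has \<open>i \<le> k\<close> and \<open>j \<le> \<lfloor>k/\<theta>\<rfloor>\<close>. Hence the reflection through the midpoint of either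
  interval only replaces \<open>(i, j)\<close> by its complement in this box and stays in \<open>S(\<theta>)\<close>; it
  obviously preserves the interval. A finite set invariant under a reflection \<open>s \<mapsto> c - s\<close>
  is listed in increasing order by reversing and reflecting its own listing, and reflection
  reverses the sequence of gaps.\<close>

lemma gaps_length [simp]: "length (gaps xs) = length xs - 1"
  by (simp add: gaps_def)

lemma gaps_nth: "i < length xs - 1 \<Longrightarrow> gaps xs ! i = xs ! Suc i - xs ! i"
  by (simp add: gaps_def nth_tl)

lemma gaps_map_reflect: "gaps (map (\<lambda>s. c - s) xs) = map uminus (gaps xs)"
  by (rule nth_equalityI) (auto simp: gaps_nth)

lemma gaps_rev: "gaps (rev xs) = map uminus (rev (gaps xs))"
proof (rule nth_equalityI)
  fix i assume "i < length (gaps (rev xs))"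
  then have i: "i < length xs - 1" by simp
  then have "length xs - Suc (Suc i) < length xs - 1" "Suc (length xs - Suc (Suc i)) = length xs - Suc i"
    by auto
  with i show "gaps (rev xs) ! i = map uminus (rev (gaps xs)) ! i"
    by (simp add: gaps_nth rev_nth)
qed simp

lemma sorted_list_of_set_reflect:
  fixes A :: "real set"
  assumes "finite A" and "(\<lambda>s. c - s) ` A = A"
  shows "sorted_list_of_set A = map (\<lambda>s. c - s) (rev (sorted_list_of_set A))"
proof -
  let ?ys = "map (\<lambda>s. c - s) (rev (sorted_list_of_set A))"
  have "sorted_wrt (<) ?ys \<and> set ?ys = A \<and> length ?ys = card A"
    using assms by (simp add: sorted_wrt_map sorted_wrt_rev)
  then show ?thesis
    using sorted_list_of_set_unique[OF \<open>finite A\<close>] by blast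
qed

lemma rev_gaps_sorted_list_of_set_reflect:
  fixes A :: "real set"
  assumes "finite A" and "(\<lambda>s. c - s) ` A = A"
  shows "rev (gaps (sorted_list_of_set A)) = gaps (sorted_list_of_set A)"
proof -
  let ?xs = "sorted_list_of_set A"
  have "gaps ?xs = gaps (map (\<lambda>s. c - s) (rev ?xs))"
    using sorted_list_of_set_reflect[OF assms] by simp
  also have "\<dots> = rev (gaps ?xs)"
    by (simp add: gaps_map_reflect gaps_rev rev_map comp_def)
  finally show ?thesis ..
qed

lemma reflect_image_eq:
  fixes A :: "real set"
  assumes "\<And>s. s \<in> A \<Longrightarrow> c - s \<in> A"
  shows "(\<lambda>s. c - s) ` A = A"
proof
  show "A \<subseteq> (\<lambda>s. c - s) ` A"
  proof
    fix s assume "s \<in> A"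
    then have "c - (c - s) \<in> (\<lambda>s. c - s) ` A"
      using assms by blast
    then show "s \<in> (\<lambda>s. c - s) ` A" by simp
  qed
qed (use assms in auto)

lemma S_box_complement:
  assumes "i \<le> I" and "j \<le> J"
  shows "(real I + real J * \<theta>) - (real i + real j * \<theta>) \<in> S \<theta>"
proof -
  have "(real I + real J * \<theta>) - (real i + real j * \<theta>) = real (I - i) + real (J - j) * \<theta>"
    using assms by (simp add: of_nat_diff algebra_simps)
  then show ?thesis by (auto simp: S_def)
qed

lemma S_coordinates_le:
  assumes "0 < \<theta>" and "real i + real j * \<theta> \<le> B"
  shows "real i \<le> B" and "real j * \<theta> \<le> B"
  using assms by (smt (verit) mult_nonneg_nonneg of_nat_0_le_iff)+

lemma finite_S_le:
  assumes "0 < \<theta>"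
  shows "finite {s \<in> S \<theta>. s \<le> B}"
proof -
  obtain K :: nat where K: "B \<le> real K" "B / \<theta> \<le> real K"
    by (metis max.bounded_iff real_arch_simple)
  have "{s \<in> S \<theta>. s \<le> B} \<subseteq> (\<lambda>(i, j). real i + real j * \<theta>) ` ({..K} \<times> {..K})"
  proof
    fix s assume "s \<in> {s \<in> S \<theta>. s \<le> B}"
    then obtain i j :: nat where s: "s = real i + real j * \<theta>" "s \<le> B"
      by (auto simp: S_def)
    from S_coordinates_le[OF assms] s have "real i \<le> B" "real j \<le> B / \<theta>"
      by (auto simp: pos_le_divide_eq assms)
    with K have "i \<le> K" "j \<le> K" by linarith+
    with s show "s \<in> (\<lambda>(i, j). real i + real j * \<theta>) ` ({..K} \<times> {..K})"
      by force
  qed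
  then show ?thesis by (rule finite_subset) simp
qed

lemma finite_Nminus: "0 < \<theta> \<Longrightarrow> finite (Nminus \<theta> k)"
  by (rule finite_subset[OF _ finite_S_le[of \<theta> "real k * \<theta>"]]) (auto simp: Nminus_def)

lemma finite_Nplus: "0 < \<theta> \<Longrightarrow> finite (Nplus \<theta> k)"
  by (rule finite_subset[OF _ finite_S_le[of \<theta> "real k"]]) (auto simp: Nplus_def)

lemma Nminus_reflect:
  assumes "0 < \<theta>" and "s \<in> Nminus \<theta> k"
  shows "(real_of_int \<lfloor>real k * \<theta>\<rfloor> + real k * \<theta>) - s \<in> Nminus \<theta> k"
proof -
  define m where "m = nat \<lfloor>real k * \<theta>\<rfloor>"
  have m: "real_of_int \<lfloor>real k * \<theta>\<rfloor> = real m"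
    using assms(1) by (simp add: m_def)
  obtain i j :: nat where s: "s = real i + real j * \<theta>" "real m \<le> s" "s \<le> real k * \<theta>"
    using assms(2) m by (auto simp: Nminus_def S_def)
  from S_coordinates_le[OF assms(1), of i j "real k * \<theta>"] s
  have "real i \<le> real k * \<theta>" "real j * \<theta> \<le> real k * \<theta>"
    by auto
  then have "i \<le> m" "j \<le> k"
    using assms(1) by (auto simp: m_def le_nat_iff le_floor_iff)
  from S_box_complement[OF this, of \<theta>] s m show ?thesis
    by (auto simp: Nminus_def algebra_simps)
qed

lemma Nplus_reflect:
  assumes "0 < \<theta>" and "s \<in> Nplus \<theta> k"
  shows "(real_of_int \<lfloor>real k / \<theta>\<rfloor> * \<theta> + real k) - s \<in> Nplus \<theta> k"
proof -
  define p where "p = nat \<lfloor>real k / \<theta>\<rfloor>"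
  have p: "real_of_int \<lfloor>real k / \<theta>\<rfloor> = real p"
    using assms(1) by (simp add: p_def)
  obtain i j :: nat where s: "s = real i + real j * \<theta>" "real p * \<theta> \<le> s" "s \<le> real k"
    using assms(2) p by (auto simp: Nplus_def S_def)
  from S_coordinates_le[OF assms(1), of i j "real k"] s
  have "real i \<le> real k" "real j \<le> real k / \<theta>"
    by (auto simp: pos_le_divide_eq assms(1))
  then have "i \<le> k" "j \<le> p"
    by (auto simp: p_def le_nat_iff le_floor_iff)
  from S_box_complement[OF this, of \<theta>] s p show ?thesis
    by (auto simp: Nplus_def algebra_simps)
qed

theorem lemma9:
  fixes \<theta> :: real and k :: nat
  assumes "\<theta> \<notin> \<rat>" and "1 < \<theta>" and "\<theta> < 2" and "1 \<le> k"
  shows "(\<lambda>s. real_of_int \<lfloor>real k * \<theta>\<rfloor> + real k * \<theta> - s) ` Nminus \<theta> k = Nminus \<theta> k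
     \<and> (\<lambda>s. real_of_int \<lfloor>real k / \<theta>\<rfloor> * \<theta> + real k - s) ` Nplus \<theta> k = Nplus \<theta> k
     \<and> finite (Nminus \<theta> k) \<and> rev (gaps (sorted_list_of_set (Nminus \<theta> k))) = gaps (sorted_list_of_set (Nminus \<theta> k))
     \<and> finite (Nplus \<theta> k) \<and> rev (gaps (sorted_list_of_set (Nplus \<theta> k))) = gaps (sorted_list_of_set (Nplus \<theta> k))"
proof -
  have pos: "0 < \<theta>" using assms(2) by simp
  have minus: "(\<lambda>s. (real_of_int \<lfloor>real k * \<theta>\<rfloor> + real k * \<theta>) - s) ` Nminus \<theta> k = Nminus \<theta> k"
    by (rule reflect_image_eq) (rule Nminus_reflect[OF pos])
  have plus: "(\<lambda>s. (real_of_int \<lfloor>real k / \<theta>\<rfloor> * \<theta> + real k) - s) ` Nplus \<theta> k = Nplus \<theta> k"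
    by (rule reflect_image_eq) (rule Nplus_reflect[OF pos])
  show ?thesis
    using minus plus finite_Nminus[OF pos] finite_Nplus[OF pos]
      rev_gaps_sorted_list_of_set_reflect[OF finite_Nminus[OF pos] minus]
      rev_gaps_sorted_list_of_set_reflect[OF finite_Nplus[OF pos] plus]
    by simp
qed

end
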